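(* Let $K$ be a finite field, let $L$ be the quadratic extension of $K$, and let $d$ be an integer with $\gcd(d,|L|-1)=1$. Then $\sum_{a\in K^\times}W_{L,d}(a)=|L|$.
   Context: For a finite field $F$ of characteristic $p$, $\psi_F(x)=\exp(2\pi i\,\mathrm{Tr}_{F/\mathbb{F}_p}(x)/p)$; for $a\in L$, $W_{L,d}(a)=\sum_{x\in L}\psi_L(x^d+ax)$. *)

theory Defs
  imports "HOL-Analysis.Analysis"
begin

definition is_subfield :: "'a::field set \<Rightarrow> bool" where
  "is_subfield K \<longleftrightarrow> 0 \<in> K \<and> 1 \<in> K \<and>
     (\<forall>x\<in>K. \<forall>y\<in>K. x + y \<in> K \<and> x * y \<in> K) \<and>
     (\<forall>x\<in>K. - x \<in> K \<and> inverse x \<in> K)"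

definition ff_degree :: "'a::{field,finite} itself \<Rightarrow> nat" where
  "ff_degree _ = (THE n. CARD('a) = CHAR('a) ^ n)"

definition abs_trace :: "'a::{field,finite} \<Rightarrow> 'a" where
  "abs_trace x = (\<Sum>i<ff_degree TYPE('a). x ^ (CHAR('a) ^ i))"

text \<open>The canonical additive character psi_F(x) = exp(2 pi i Tr(x)/p), where Tr(x),
  an element of the prime field, is identified with its representative k in {0..p-1}.\<close>
definition psi :: "'a::{field,finite} \<Rightarrow> complex" where
  "psi x = exp (2 * of_real pi * \<i> *
      of_nat (THE k. k < CHAR('a) \<and> of_nat k = abs_trace x) / of_nat CHAR('a))"

text \<open>Weil sum W_{L,d}(a) = sum over x in L of psi_L(x^d + a x); x^d for integer d
  (with the Isabelle convention 0 powi d = 0).\<close>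
definition W :: "int \<Rightarrow> 'a::{field,finite} \<Rightarrow> complex" where
  "W d a = (\<Sum>x\<in>UNIV. psi (x powi d + a * x))"

end

(* Write q = |K| and S(x) = \<Sum>a\<in>K. psi(a x).  Expanding W and exchanging the sums gives
   \<Sum>a\<in>K-{0}. W(a) = \<Sum>x. psi(x^d) (S(x) - 1).  Because Tr_{L/F_p} = Tr_{K/F_p} \<circ> Tr_{L/K},
   orthogonality of additive characters yields S(x) = q if Tr_{L/K}(x) = x + x^q vanishes and
   S(x) = 0 otherwise; counting \<Sum>x. S(x) = |L| shows that this kernel has q elements.  Since
   gcd(d, |L| - 1) = 1, x \<mapsto> x^d permutes L, so \<Sum>x. psi(x^d) = 0, and it maps the kernel
   {x. x^q = -x} into itself (d is odd in odd characteristic), where psi(x^d) = 1.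
   Hence the sum equals q * q = |L|. *)

theory Submission
  imports Defs
begin

section \<open>Finite fields\<close>

lemma prime_CHAR_finite: "prime CHAR('a::{field,finite})"
  using prime_CHAR_semidom[where ?'a='a] finite_imp_CHAR_pos[where ?'a='a] by simp

lemma CHAR_finite_ge_2: "CHAR('a::{field,finite}) \<ge> 2"
  using prime_CHAR_finite[where ?'a='a] prime_ge_2_nat by blast

lemma is_subfieldD:
  assumes "is_subfield K"
  shows "0 \<in> K" "1 \<in> K" "x \<in> K \<Longrightarrow> y \<in> K \<Longrightarrow> x + y \<in> K"
    "x \<in> K \<Longrightarrow> y \<in> K \<Longrightarrow> x * y \<in> K" "x \<in> K \<Longrightarrow> - x \<in> K"
    "x \<in> K \<Longrightarrow> inverse x \<in> K"
  using assms unfolding is_subfield_def by blast+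

lemma card_subfield_ge_2:
  assumes "is_subfield (K::'a::field set)" "finite K"
  shows "card K \<ge> 2"
proof -
  have "card {0::'a, 1} \<le> card K"
    using assms is_subfieldD(1,2)[OF assms(1)] by (intro card_mono) simp_all
  then show ?thesis
    by simp
qed

lemma subfield_power_card:
  assumes K: "is_subfield (K::'a::field set)" "finite K" and a: "a \<in> K"
  shows "a ^ card K = a"
proof (cases "a = 0")
  case False
  have "bij_betw (\<lambda>y. a * y) (K - {0}) (K - {0})"
  proof (rule bij_betw_byWitness[where f'="\<lambda>y. inverse a * y"])
    show "(\<lambda>y. a * y) ` (K - {0}) \<subseteq> K - {0}"
      using False is_subfieldD(4)[OF K(1) a] by auto
    show "(\<lambda>y. inverse a * y) ` (K - {0}) \<subseteq> K - {0}"
      using False is_subfieldD(4)[OF K(1) is_subfieldD(6)[OF K(1) a]] by auto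
  qed (use False in auto)
  have "a ^ card (K - {0}) * (\<Prod>y\<in>K-{0}. y) = (\<Prod>y\<in>K-{0}. a * y)"
    by (simp add: prod.distrib)
  also have "\<dots> = (\<Prod>y\<in>K-{0}. y)"
    by (rule prod.reindex_bij_betw) fact
  finally have one: "a ^ card (K - {0}) = 1"
    using K(2) by simp
  have "Suc (card (K - {0})) = card K"
    using card_subfield_ge_2[OF K] is_subfieldD(1)[OF K(1)] by (simp add: card_Diff_singleton)
  then have "a ^ card K = a * a ^ card (K - {0})"
    by (metis power_Suc)
  with one show ?thesis
    by simp
next
  case True
  then show ?thesis
    using card_subfield_ge_2[OF K] by (simp add: power_0_left)
qed

lemma power_CARD: "(x::'a::{field,finite}) ^ CARD('a) = x"
  by (rule subfield_power_card) (simp_all add: is_subfield_def)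

definition int_submodule :: "'a::ring_1 set \<Rightarrow> bool" where
  "int_submodule H \<longleftrightarrow> 0 \<in> H \<and> (\<forall>x\<in>H. \<forall>y\<in>H. x + y \<in> H) \<and> (\<forall>c::int. \<forall>x\<in>H. of_int c * x \<in> H)"

lemma int_submodule_extend:
  fixes H :: "'a::{field,finite} set"
  assumes H: "int_submodule H" and x: "x \<notin> H"
  shows "\<exists>H' :: 'a set. int_submodule H' \<and> card H' = CHAR('a) * card H"
proof -
  let ?p = "int CHAR('a)"
  define H' where "H' = (\<lambda>(h,k). h + of_int k * x) ` (H \<times> {0..<?p})"
  have p0: "?p > 0"
    using CHAR_finite_ge_2[where ?'a='a] by simp
  have H_simps: "0 \<in> H" "h \<in> H \<Longrightarrow> h' \<in> H \<Longrightarrow> h + h' \<in> H" "h \<in> H \<Longrightarrow> of_int c * h \<in> H"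
    for h h' c using H unfolding int_submodule_def by blast+
  have mem: "h + of_int k * x \<in> H'" if "h \<in> H" for h k
  proof -
    have "?p dvd k - k mod ?p"
      by (simp add: minus_mod_eq_mult_div)
    then have "(of_int k :: 'a) = of_int (k mod ?p)"
      using of_int_eq_0_iff_char_dvd[where ?'a='a, of "k - k mod ?p"] by simp
    moreover have "(h, k mod ?p) \<in> H \<times> {0..<?p}"
      using that p0 by auto
    ultimately show ?thesis
      unfolding H'_def by (auto intro!: image_eqI[where x="(h, k mod ?p)"])
  qed
  have "int_submodule H'"
    unfolding int_submodule_def
  proof (intro conjI ballI allI)
    show "0 \<in> H'"
      using mem[of 0 0] H_simps by simp
  next
    fix u v assume "u \<in> H'" "v \<in> H'"
    then obtain h k h' k' where "h \<in> H" "h' \<in> H" "u = h + of_int k * x" "v = h' + of_int k' * x"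
      unfolding H'_def by auto
    then show "u + v \<in> H'"
      using mem[of "h + h'" "k + k'"] H_simps by (simp add: algebra_simps)
  next
    fix c :: int and u assume "u \<in> H'"
    then obtain h k where "h \<in> H" "u = h + of_int k * x"
      unfolding H'_def by auto
    then show "of_int c * u \<in> H'"
      using mem[of "of_int c * h" "c * k"] H_simps by (simp add: algebra_simps)
  qed
  moreover have "inj_on (\<lambda>(h,k). h + of_int k * x) (H \<times> {0..<?p})"
  proof (rule inj_onI, clarsimp)
    fix h k h' k' assume hk: "h \<in> H" "h' \<in> H" "0 \<le> k" "k < ?p" "0 \<le> k'" "k' < ?p"
      and eq: "h + of_int k * x = h' + of_int k' * x"
    have "k = k'"
    proof (rule ccontr)
      assume "k \<noteq> k'"
      then have "\<not> ?p dvd k - k'"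
        using hk dvd_imp_le_int[of "k - k'" ?p] by auto
      then have "coprime (k - k') ?p"
        using prime_CHAR_finite[where ?'a='a]
        by (metis coprime_commute prime_imp_coprime prime_nat_int_transfer)
      then obtain u v where "u * (k - k') + v * ?p = 1"
        using bezout_int[of "k - k'" ?p] by auto
      then have "(of_int (u * (k - k') + v * ?p) :: 'a) = 1"
        by simp
      then have inv: "(of_int u * of_int (k - k') :: 'a) = 1"
        by simp
      have "of_int (k - k') * x = h' + of_int (-1) * h"
        using eq by (simp add: algebra_simps)
      then have "of_int u * (of_int (k - k') * x) \<in> H"
        using hk H_simps by metis
      then show False
        using x inv by (simp add: mult.assoc[symmetric])
    qed
    with eq show "h = h' \<and> k = k'"
      by simp
  qed
  then have "card H' = card H * CHAR('a)"
    unfolding H'_def by (simp add: card_image card_cartesian_product)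
  ultimately show ?thesis
    by (intro exI[of _ H']) (simp add: mult.commute)
qed

lemma CARD_eq_CHAR_power: "CARD('a::{field,finite}) = CHAR('a) ^ ff_degree TYPE('a)"
proof -
  have "\<exists>N. CARD('a) = CHAR('a) ^ N"
    if "int_submodule H" "card H = CHAR('a) ^ j" for H :: "'a set" and j
    using that
  proof (induction "CARD('a) - card H" arbitrary: j H rule: less_induct)
    case (less H j)
    show ?case
    proof (cases "H = UNIV")
      case False
      then obtain x where x: "x \<notin> H"
        by auto
      obtain H' :: "'a set" where H': "int_submodule H' \<and> card H' = CHAR('a) * card H"
        using int_submodule_extend[OF less(2) x] by blast
      have "card H' > card H"
        using H' less(3) CHAR_finite_ge_2[where ?'a='a] by simp
      moreover have "card H' \<le> CARD('a)"
        by (rule card_mono) auto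
      ultimately have "CARD('a) - card H' < CARD('a) - card H"
        by linarith
      then show ?thesis
        using less(1)[of H' "Suc j"] H' less(3) by auto
    qed (use less in auto)
  qed
  from this[of "{0}" 0] obtain N where N: "CARD('a) = CHAR('a) ^ N"
    unfolding int_submodule_def by auto
  have "(THE n. CARD('a) = CHAR('a) ^ n) = N"
    by (rule the_equality) (use N CHAR_finite_ge_2[where ?'a='a] power_inject_exp in auto)
  then show ?thesis
    using N unfolding ff_degree_def by simp
qed

section \<open>The absolute trace\<close>

lemma frobenius_add:
  "((x::'a::{field,finite}) + y) ^ (CHAR('a) ^ i) = x ^ (CHAR('a) ^ i) + y ^ (CHAR('a) ^ i)"
  by (rule freshmans_dream') (simp_all add: prime_CHAR_finite)

lemma abs_trace_add: "abs_trace ((x::'a::{field,finite}) + y) = abs_trace x + abs_trace y"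
  unfolding abs_trace_def by (simp add: frobenius_add sum.distrib)

lemma abs_trace_power_CHAR: "abs_trace (x::'a::{field,finite}) ^ CHAR('a) = abs_trace x"
proof -
  let ?p = "CHAR('a)" and ?N = "ff_degree TYPE('a)"
  have "abs_trace x ^ ?p = (\<Sum>i<?N. (x ^ (?p ^ i)) ^ ?p)"
    unfolding abs_trace_def by (rule freshmans_dream_sum) (simp_all add: prime_CHAR_finite)
  also have "\<dots> = (\<Sum>i<?N. x ^ (?p ^ Suc i))"
    by (simp add: power_mult[symmetric] mult.commute)
  also have "\<dots> = (\<Sum>i<?N. x ^ (?p ^ i))"
  proof (cases ?N)
    case (Suc m)
    have "x ^ (?p ^ Suc m) = x"
      using power_CARD[of x] CARD_eq_CHAR_power[where ?'a='a] Suc by simp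
    then show ?thesis
      unfolding Suc sum.lessThan_Suc_shift[of "\<lambda>i. x ^ (?p ^ i)"] sum.lessThan_Suc by simp
  qed simp
  finally show ?thesis
    unfolding abs_trace_def .
qed

lemma of_nat_power_CHAR: "(of_nat k :: 'a::{field,finite}) ^ CHAR('a) = of_nat k"
  using freshmans_dream_sum[OF prime_CHAR_finite refl, of "\<lambda>_. 1::'a" "{..<k}"] by simp

lemma inj_on_of_nat_CHAR: "inj_on (of_nat :: nat \<Rightarrow> 'a::{field,finite}) {..<CHAR('a)}"
proof (rule inj_onI)
  fix a b assume "a \<in> {..<CHAR('a)}" "b \<in> {..<CHAR('a)}" "(of_nat a :: 'a) = of_nat b"
  then have dvd: "int CHAR('a) dvd int a - int b" and less: "\<bar>int a - int b\<bar> < int CHAR('a)"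
    using of_int_eq_0_iff_char_dvd[where ?'a='a, of "int a - int b"] by auto
  show "a = b"
  proof (rule ccontr)
    assume "a \<noteq> b"
    then have "\<bar>int CHAR('a)\<bar> \<le> \<bar>int a - int b\<bar>"
      using dvd_imp_le_int[OF _ dvd] by simp
    with less show False
      by simp
  qed
qed

lemma ex1_of_nat_if_power_CHAR:
  assumes "(y::'a::{field,finite}) ^ CHAR('a) = y"
  shows "\<exists>!k. k < CHAR('a) \<and> of_nat k = y"
proof -
  let ?p = "CHAR('a)"
  define P where "P = monom (1::'a) ?p - [:0, 1:]"
  have "coeff P ?p = 1"
    using CHAR_finite_ge_2[where ?'a='a] unfolding P_def by (simp add: coeff_pCons split: nat.split)
  then have "P \<noteq> 0"
    by auto
  moreover have "degree P \<le> ?p"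
    unfolding P_def using CHAR_finite_ge_2[where ?'a='a]
    by (intro degree_diff_le) (auto simp: degree_monom_le degree_pCons_eq_if)
  moreover have roots: "{z. poly P z = 0} = {z. z ^ ?p = z}"
    unfolding P_def by (auto simp: poly_monom)
  ultimately have "card {z::'a. z ^ ?p = z} \<le> card (of_nat ` {..<?p} :: 'a set)"
    using card_poly_roots_bound[of P] inj_on_of_nat_CHAR[where ?'a='a] by (simp add: card_image)
  moreover have "of_nat ` {..<?p} \<subseteq> {z::'a. z ^ ?p = z}"
    by (auto simp: of_nat_power_CHAR)
  ultimately have "of_nat ` {..<?p} = {z::'a. z ^ ?p = z}"
    by (intro card_seteq) simp_all
  then have "\<exists>k<?p. of_nat k = y"
    using assms by (metis (mono_tags, lifting) imageE lessThan_iff mem_Collect_eq)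
  then show ?thesis
    using inj_on_of_nat_CHAR[where ?'a='a] by (auto simp: inj_on_def)
qed

lemma frobenius_sum_nonzero:
  fixes c :: "'a::{field,finite}"
  assumes c: "c \<noteq> 0" and n: "n \<ge> 1" and S: "card S > CHAR('a) ^ (n - 1)"
  shows "\<exists>a\<in>S. (\<Sum>i<n. (c * a) ^ (CHAR('a) ^ i)) \<noteq> 0"
proof (rule ccontr)
  let ?p = "CHAR('a)"
  assume none: "\<not> ?thesis"
  define R where "R = (\<Sum>i<n. monom (c ^ (?p ^ i)) (?p ^ i))"
  have poly_R: "poly R a = (\<Sum>i<n. (c * a) ^ (?p ^ i))" for a
    unfolding R_def poly_sum by (simp add: poly_monom power_mult_distrib)
  have "coeff R 1 = (\<Sum>i<n. if i = 0 then c else 0)"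
    unfolding R_def coeff_sum
    by (rule sum.cong) (use CHAR_finite_ge_2[where ?'a='a] in \<open>auto simp: coeff_monom\<close>)
  then have "R \<noteq> 0"
    using c n by auto
  have "degree R \<le> ?p ^ (n - 1)"
    unfolding R_def
  proof (rule degree_sum_le)
    fix i assume "i \<in> {..<n}"
    then have "?p ^ i \<le> ?p ^ (n - 1)"
      using CHAR_finite_ge_2[where ?'a='a] by (intro power_increasing) auto
    then show "degree (monom (c ^ (?p ^ i)) (?p ^ i)) \<le> ?p ^ (n - 1)"
      using degree_monom_le order_trans by blast
  qed simp
  moreover have "card S \<le> card {x. poly R x = 0}"
    by (rule card_mono) (use none poly_R in auto)
  ultimately show False
    using card_poly_roots_bound[OF \<open>R \<noteq> 0\<close>] S by simp
qed

lemma ex_abs_trace_nonzero: "\<exists>y::'a::{field,finite}. abs_trace y \<noteq> 0"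
proof -
  let ?p = "CHAR('a)" and ?N = "ff_degree TYPE('a)"
  have "card {0::'a, 1} \<le> CARD('a)"
    by (rule card_mono) simp_all
  then have "?N \<ge> 1"
    using CARD_eq_CHAR_power[where ?'a='a] by (cases ?N) auto
  moreover have "?p ^ (?N - 1) < ?p ^ ?N"
    using CHAR_finite_ge_2[where ?'a='a] \<open>?N \<ge> 1\<close> by (intro power_strict_increasing) auto
  then have "?p ^ (?N - 1) < card (UNIV :: 'a set)"
    using CARD_eq_CHAR_power[where ?'a='a] by simp
  ultimately obtain a :: 'a where "(\<Sum>i<?N. (1 * a) ^ (?p ^ i)) \<noteq> 0"
    using frobenius_sum_nonzero[of 1 ?N UNIV] by auto
  then show ?thesis
    unfolding abs_trace_def by auto
qed

section \<open>The canonical additive character\<close>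

definition trace_index :: "'a::{field,finite} \<Rightarrow> nat" where
  "trace_index x = (THE k. k < CHAR('a) \<and> of_nat k = abs_trace x)"

lemma of_nat_trace_index: "of_nat (trace_index x) = abs_trace (x::'a::{field,finite})"
  unfolding trace_index_def
  using theI'[OF ex1_of_nat_if_power_CHAR[OF abs_trace_power_CHAR[of x]]] by blast

lemma psi_eq_exp:
  "psi (x::'a::{field,finite}) = exp (2 * of_real pi * \<i> * of_nat (trace_index x) / of_nat CHAR('a))"
  unfolding psi_def trace_index_def ..

lemma exp_2pi_i_div_eq_iff:
  assumes "p > 0"
  shows "exp (2 * of_real pi * \<i> * of_nat a / of_nat p) = exp (2 * of_real pi * \<i> * of_nat b / of_nat p)
    \<longleftrightarrow> int p dvd int a - int b"
proof -
  define c where "c = 2 * of_real pi * \<i> / (of_nat p :: complex)"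
  have "c \<noteq> 0"
    using assms by (simp add: c_def)
  have "2 * of_real pi * \<i> * of_nat a / of_nat p = 2 * of_real pi * \<i> * of_nat b / of_nat p
      + of_int (2 * n) * pi * \<i> \<longleftrightarrow> int a - int b = int p * n" for n :: int
  proof -
    have "2 * of_real pi * \<i> * of_nat a / of_nat p = 2 * of_real pi * \<i> * of_nat b / of_nat p
        + of_int (2 * n) * pi * \<i> \<longleftrightarrow> c * of_nat a = c * (of_nat b + of_nat p * of_int n)"
      using assms by (simp add: c_def field_simps)
    also have "\<dots> \<longleftrightarrow> of_int (int a) = (of_int (int b + int p * n) :: complex)"
      using \<open>c \<noteq> 0\<close> by simp
    also have "\<dots> \<longleftrightarrow> int a - int b = int p * n"
      by (simp only: of_int_eq_iff) linarith
    finally show ?thesis .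
  qed
  then show ?thesis
    unfolding exp_eq dvd_def by simp
qed

lemma exp_2pi_i_div_CHAR_eq_iff:
  "exp (2 * of_real pi * \<i> * of_nat a / of_nat CHAR('a)) = exp (2 * of_real pi * \<i> * of_nat b / of_nat CHAR('a))
    \<longleftrightarrow> (of_nat a :: 'a::{field,finite}) = of_nat b"
  using CHAR_finite_ge_2[where ?'a='a] of_int_eq_0_iff_char_dvd[where ?'a='a, of "int a - int b"]
  by (simp add: exp_2pi_i_div_eq_iff)

lemma psi_eq_iff: "psi x = psi y \<longleftrightarrow> abs_trace x = abs_trace (y::'a::{field,finite})"
  by (simp add: psi_eq_exp exp_2pi_i_div_CHAR_eq_iff of_nat_trace_index)

lemma psi_add: "psi ((x::'a::{field,finite}) + y) = psi x * psi y"
proof -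
  have "psi x * psi y = exp (2 * of_real pi * \<i> * of_nat (trace_index x + trace_index y) / of_nat CHAR('a))"
    by (simp add: psi_eq_exp exp_add[symmetric] add_divide_distrib distrib_left)
  also have "\<dots> = psi (x + y)"
    unfolding psi_eq_exp exp_2pi_i_div_CHAR_eq_iff
    by (simp add: of_nat_trace_index abs_trace_add)
  finally show ?thesis ..
qed

lemma abs_trace_0: "abs_trace (0::'a::{field,finite}) = 0"
  unfolding abs_trace_def using CHAR_finite_ge_2[where ?'a='a] by (simp add: power_0_left)

lemma psi_0: "psi (0::'a::{field,finite}) = 1"
proof -
  have "psi (0::'a) = psi (0::'a) * psi (0::'a)"
    using psi_add[of "0::'a" 0] by (simp only: add_0)
  moreover have "psi (0::'a) \<noteq> 0"
    by (simp add: psi_eq_exp)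
  ultimately show ?thesis
    by simp
qed

lemma psi_eq_1_iff: "psi (x::'a::{field,finite}) = 1 \<longleftrightarrow> abs_trace x = 0"
  using psi_eq_iff[of x 0] by (simp add: psi_0 abs_trace_0)

lemma sum_psi_mult_eq_0:
  fixes b x :: "'a::{field,finite}"
  assumes "bij_betw (\<lambda>a. a + b) A A" and "abs_trace (b * x) \<noteq> 0"
  shows "(\<Sum>a\<in>A. psi (a * x)) = 0"
proof -
  have "(\<Sum>a\<in>A. psi (a * x)) = (\<Sum>a\<in>A. psi ((a + b) * x))"
    using sum.reindex_bij_betw[OF assms(1), of "\<lambda>a. psi (a * x)"] by simp
  also have "\<dots> = (\<Sum>a\<in>A. psi (a * x)) * psi (b * x)"
    unfolding sum_distrib_right by (simp add: distrib_right psi_add)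
  finally have "(\<Sum>a\<in>A. psi (a * x)) * (1 - psi (b * x)) = 0"
    by (simp add: right_diff_distrib)
  moreover have "psi (b * x) \<noteq> 1"
    using assms(2) psi_eq_1_iff by blast
  ultimately show ?thesis
    by simp
qed

lemma bij_betw_add_UNIV: "bij_betw (\<lambda>a. a + b) UNIV (UNIV::'a::ab_group_add set)"
  by (rule bij_betwI[of _ _ _ "\<lambda>a. a - b"]) auto

lemma sum_psi_mult: "(\<Sum>a\<in>UNIV. psi (a * x)) = (if x = 0 then of_nat CARD('a) else (0::complex))"
  for x :: "'a::{field,finite}"
proof (cases "x = 0")
  case False
  obtain y :: 'a where "abs_trace y \<noteq> 0"
    using ex_abs_trace_nonzero by blast
  then have "abs_trace (y / x * x) \<noteq> 0"
    using False by simp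
  then have "(\<Sum>a\<in>UNIV. psi (a * x)) = 0"
    by (rule sum_psi_mult_eq_0[OF bij_betw_add_UNIV])
  with False show ?thesis
    by simp
qed (simp add: psi_0)

lemma sum_psi: "(\<Sum>x\<in>UNIV. psi (x::'a::{field,finite})) = 0"
  using sum_psi_mult[of "1::'a"] by simp

section \<open>Power maps\<close>

lemma power_int_CARD_minus_1:
  assumes "(x::'a::{field,finite}) \<noteq> 0"
  shows "x powi (int CARD('a) - 1) = 1"
proof -
  have "x * x ^ (CARD('a) - 1) = x * 1"
    using power_CARD[of x] by (metis One_nat_def Suc_pred mult_1_right power_Suc zero_less_card_finite)
  then have "x ^ (CARD('a) - 1) = 1"
    using assms by simp
  then show ?thesis
    by (simp add: of_nat_diff Suc_leI flip: power_int_of_nat)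
qed

(* d \<noteq> 0 is needed because 0 powi 0 = 1; for |L| = 2 coprimality alone allows d = 0. *)
lemma bij_power_int:
  assumes "coprime d (int CARD('a::{field,finite}) - 1)" and "d \<noteq> 0"
  shows "bij (\<lambda>x::'a. x powi d)"
proof -
  obtain u v where uv: "u * d + v * (int CARD('a) - 1) = 1"
    using assms(1) bezout_int[of d "int CARD('a) - 1"] by (auto simp: coprime_iff_gcd_eq_1)
  have inverse: "(x powi d) powi u = x" if "x \<noteq> 0" for x :: 'a
  proof -
    have "x = x powi (u * d + v * (int CARD('a) - 1))"
      by (simp only: uv power_int_1_right)
    also have "\<dots> = x powi (u * d) * x powi (v * (int CARD('a) - 1))"
      by (rule power_int_add) (use that in simp)
    also have "x powi (u * d) = (x powi d) powi u"
      by (simp only: mult.commute[of u] power_int_mult)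
    also have "x powi (v * (int CARD('a) - 1)) = 1"
      by (simp only: mult.commute[of v] power_int_mult power_int_CARD_minus_1[OF that] power_int_1_left)
    finally show ?thesis
      by simp
  qed
  have "inj (\<lambda>x::'a. x powi d)"
  proof (rule injI)
    fix x y :: 'a
    assume eq: "x powi d = y powi d"
    show "x = y"
    proof (cases "x = 0 \<or> y = 0")
      case True
      then show ?thesis
        using eq assms(2) by auto
    next
      case False
      then show ?thesis
        using eq inverse by metis
    qed
  qed
  then show ?thesis
    using finite_UNIV_inj_surj[of "\<lambda>x::'a. x powi d"] by (simp add: bij_def)
qed

lemma power_int_uminus_if_coprime:
  assumes "coprime d (int CARD('a::{field,finite}) - 1)"
  shows "(- x) powi d = - ((x::'a) powi d)"
proof (cases "CHAR('a) = 2")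
  case False
  then have "odd CHAR('a)"
    using prime_CHAR_finite[where ?'a='a] prime_odd_nat CHAR_finite_ge_2[where ?'a='a] by force
  then have "even (int CARD('a) - 1)"
    using CARD_eq_CHAR_power[where ?'a='a] by simp
  then have "odd d"
    using assms coprime_common_divisor[of d "int CARD('a) - 1" 2] by auto
  then show ?thesis
    by simp
qed (metis uminus_CHAR_2)

lemma sum_psi_power_int:
  assumes "coprime d (int CARD('a::{field,finite}) - 1)" and "d \<noteq> 0"
  shows "(\<Sum>x\<in>UNIV. psi ((x::'a) powi d)) = 0"
  using sum.reindex_bij_betw[OF bij_power_int[OF assms], of psi] sum_psi by simp

section \<open>Quadratic extensions\<close>

lemma sum_lessThan_add:
  fixes m n :: nat
  shows "(\<Sum>i<m + n. f i) = (\<Sum>i<m. f i) + (\<Sum>i<n. f (m + i))"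
  by (induction n) (simp_all add: add.assoc)

locale quadratic_subfield =
  fixes K :: "'a::{field,finite} set"
  assumes subfield: "is_subfield K" and CARD_eq_card_sq: "CARD('a) = card K ^ 2"
begin

definition rel_trace :: "'a \<Rightarrow> 'a" where
  "rel_trace x = x + x ^ card K"

lemma power_card_K: "a \<in> K \<Longrightarrow> a ^ card K = a"
  by (rule subfield_power_card[OF subfield]) simp_all

lemma rel_trace_mult: "a \<in> K \<Longrightarrow> rel_trace (a * x) = a * rel_trace x"
  unfolding rel_trace_def by (simp add: power_mult_distrib power_card_K distrib_left)

lemma card_K_eq_CHAR_power: "\<exists>n. card K = CHAR('a) ^ n"
proof -
  have "card K dvd CHAR('a) ^ ff_degree TYPE('a)"
    using CARD_eq_card_sq CARD_eq_CHAR_power[where ?'a='a] by (metis dvd_triv_left power2_eq_square)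
  then show ?thesis
    using divides_primepow_nat[OF prime_CHAR_finite] by blast
qed

lemma abs_trace_eq_sum_rel_trace:
  assumes n: "card K = CHAR('a) ^ n"
  shows "abs_trace x = (\<Sum>i<n. rel_trace x ^ (CHAR('a) ^ i))"
proof -
  let ?p = "CHAR('a)"
  have "?p ^ ff_degree TYPE('a) = ?p ^ (n + n)"
    using CARD_eq_card_sq CARD_eq_CHAR_power[where ?'a='a] n by (simp add: power_add power2_eq_square)
  then have degree: "ff_degree TYPE('a) = n + n"
    using CHAR_finite_ge_2[where ?'a='a] power_inject_exp by (metis Suc_1 Suc_le_lessD)
  have "abs_trace x = (\<Sum>i<n. x ^ (?p ^ i)) + (\<Sum>i<n. x ^ (?p ^ (n + i)))"
    unfolding abs_trace_def degree by (rule sum_lessThan_add)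
  also have "(\<Sum>i<n. x ^ (?p ^ (n + i))) = (\<Sum>i<n. (x ^ card K) ^ (?p ^ i))"
    by (simp add: n power_add power_mult)
  finally show ?thesis
    unfolding rel_trace_def by (simp add: frobenius_add sum.distrib)
qed

lemma rel_trace_eq_0_imp_abs_trace_eq_0:
  assumes "rel_trace x = 0"
  shows "abs_trace x = 0"
proof -
  obtain n where "card K = CHAR('a) ^ n"
    using card_K_eq_CHAR_power by blast
  then show ?thesis
    using CHAR_finite_ge_2[where ?'a='a] assms
    by (simp add: abs_trace_eq_sum_rel_trace power_0_left)
qed

lemma sum_psi_mult_K:
  "(\<Sum>a\<in>K. psi (a * x)) = (if rel_trace x = 0 then of_nat (card K) else 0)"
proof (cases "rel_trace x = 0")
  case True
  then have "psi (a * x) = 1" if "a \<in> K" for a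
    using that by (simp add: rel_trace_mult psi_eq_1_iff rel_trace_eq_0_imp_abs_trace_eq_0)
  with True show ?thesis
    by simp
next
  case False
  let ?p = "CHAR('a)"
  obtain n where n: "card K = ?p ^ n"
    using card_K_eq_CHAR_power by blast
  have "n \<ge> 1"
    using n card_subfield_ge_2[OF subfield] by (cases n) auto
  moreover have "?p ^ (n - 1) < card K"
    using n CHAR_finite_ge_2[where ?'a='a] \<open>n \<ge> 1\<close> by (simp add: power_strict_increasing)
  ultimately obtain b where b: "b \<in> K" "(\<Sum>i<n. (rel_trace x * b) ^ (?p ^ i)) \<noteq> 0"
    using frobenius_sum_nonzero[OF False] by blast
  then have "abs_trace (b * x) \<noteq> 0"
    by (simp add: abs_trace_eq_sum_rel_trace[OF n] rel_trace_mult mult.commute)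
  moreover have "bij_betw (\<lambda>a. a + b) K K"
  proof (rule bij_betw_byWitness[where f'="\<lambda>a. a + - b"])
    show "(\<lambda>a. a + b) ` K \<subseteq> K" "(\<lambda>a. a + - b) ` K \<subseteq> K"
      using b(1) is_subfieldD(3,5)[OF subfield] by (auto simp del: add_uminus_conv_diff)
  qed auto
  ultimately show ?thesis
    using False sum_psi_mult_eq_0 by simp
qed

lemma card_rel_trace_kernel: "card {x. rel_trace x = 0} = card K"
proof -
  have "of_nat (card K * card {x. rel_trace x = 0}) = (\<Sum>x\<in>UNIV. \<Sum>a\<in>K. psi (a * x))"
    by (simp add: sum_psi_mult_K sum.If_cases)
  also have "\<dots> = (\<Sum>a\<in>K. \<Sum>x\<in>UNIV. psi (x * a))"
    by (subst sum.swap) (simp add: mult.commute)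
  also have "\<dots> = of_nat (card K * card K)"
    using is_subfieldD(1)[OF subfield] CARD_eq_card_sq
    by (simp add: sum_psi_mult sum.If_cases power2_eq_square)
  finally have "card K * card {x. rel_trace x = 0} = card K * card K"
    by (simp only: of_nat_eq_iff)
  then show ?thesis
    using card_subfield_ge_2[OF subfield] by (cases "K = {}") auto
qed

lemma rel_trace_power_int:
  assumes "coprime d (int CARD('a) - 1)" and "rel_trace x = 0"
  shows "rel_trace (x powi d) = 0"
proof -
  have "x ^ card K = - x"
    using assms(2) unfolding rel_trace_def by (simp add: eq_neg_iff_add_eq_0 add.commute)
  moreover have "(x powi d) ^ card K = (x ^ card K) powi d"
    by (metis mult.commute power_int_mult power_int_of_nat)
  ultimately show ?thesis
    unfolding rel_trace_def by (simp add: power_int_uminus_if_coprime[OF assms(1)])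
qed

lemma sum_W_subfield_units:
  assumes "coprime d (int CARD('a) - 1)" and "d \<noteq> 0"
  shows "(\<Sum>a\<in>K - {0}. W d a) = of_nat CARD('a)"
proof -
  have "(\<Sum>a\<in>K - {0}. W d a) = (\<Sum>x\<in>UNIV. \<Sum>a\<in>K - {0}. psi (x powi d) * psi (a * x))"
    unfolding W_def psi_add by (rule sum.swap)
  also have "\<dots> = (\<Sum>x\<in>UNIV. psi (x powi d) * ((\<Sum>a\<in>K. psi (a * x)) - 1))"
    using is_subfieldD(1)[OF subfield] by (simp add: sum_distrib_left[symmetric] sum_diff1 psi_0)
  also have "\<dots> = (\<Sum>x\<in>UNIV. psi (x powi d) * (\<Sum>a\<in>K. psi (a * x)))"
    using sum_psi_power_int[OF assms] by (simp add: right_diff_distrib sum_subtractf)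
  also have "\<dots> = (\<Sum>x\<in>UNIV. if rel_trace x = 0 then of_nat (card K) else 0)"
    by (rule sum.cong[OF refl])
      (simp add: sum_psi_mult_K psi_eq_1_iff rel_trace_eq_0_imp_abs_trace_eq_0 rel_trace_power_int[OF assms(1)])
  also have "\<dots> = of_nat (card K * card {x. rel_trace x = 0})"
    by (simp add: sum.If_cases)
  also have "\<dots> = of_nat CARD('a)"
    by (simp add: card_rel_trace_kernel CARD_eq_card_sq power2_eq_square)
  finally show ?thesis .
qed

end

theorem lemma2p5:
  fixes K :: "'a::{field,finite} set" and d :: int
  assumes "is_subfield K"
    and "CARD('a) = card K ^ 2"
    and "gcd d (int CARD('a) - 1) = 1"
  shows "(\<Sum>a\<in>K - {0}. W d a) = of_nat CARD('a)"
proof -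
  interpret quadratic_subfield K
    using assms(1,2) by unfold_locales
  have "CARD('a) \<ge> 4"
    using assms(2) card_subfield_ge_2[OF assms(1)] power_mono[of 2 "card K" 2] by simp
  then have "d \<noteq> 0"
    using assms(3) by auto
  then show ?thesis
    using sum_W_subfield_units assms(3) by (simp add: coprime_iff_gcd_eq_1)
qed

end
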